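(* Let $\mathcal H_A,\mathcal H_B$ be Hilbert spaces of dimension $N$, $\rho_{AB}$ a density operator on $\mathcal H_A\otimes\mathcal H_B$, and $X,Y$ projective measurements on $A$ (given by orthonormal bases of $\mathcal H_A$). Let $\vec s^{\,(x)}$ (resp. $\vec s^{\,(y)}$) be the least upper bound in the majorization lattice of the set $\{\vec p(x|x')\}$ (resp. $\{\vec p(y|y')\}$), where $X'$ (resp. $Y'$) ranges over all projective measurements on $B$ given by orthonormal bases of $\mathcal H_B$. Then for all projective measurements $X',Y'$ on $B$, $$\vec p(x|x')\oplus\vec p(y|y')\prec \vec s^{\,(x)}\oplus\vec s^{\,(y)},\qquad \vec p(x|x')\otimes\vec p(y|y')\prec \vec s^{\,(x)}\otimes\vec s^{\,(y)},\qquad \vec p(x|x')+\vec p(y|y')\prec \vec s^{\,(x)\downarrow}+\vec s^{\,(y)\downarrow},$$ i.e. $\vec p(x|x')*\vec p(y|y')\prec\vec s^{\,(x)}*\vec s^{\,(y)}$ for each binary operation $*$ among direct sum (concatenation), direct (Kronecker) product, and vector sum of descending-ordered vectors.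
   Context: For a measurement $X$ on $A$ with basis $\{|x_i\rangle\}$ and $X'$ on $B$ with basis $\{|x'_\mu\rangle\}$, set $P_{i\mu}=\langle x_i|\otimes\langle x'_\mu|\,\rho_{AB}\,|x_i\rangle\otimes|x'_\mu\rangle$, $\vec p^{\,(\mu)}(x)=(P_{1\mu},\dots,P_{N\mu})$, and define the majorized marginal $\vec p(x|x')=\sum_{\mu=1}^N\vec p^{\,(\mu)\downarrow}(x)$, where $\downarrow$ denotes rearrangement of components in descending order; similarly for $\vec p(y|y')$. Majorization: for real vectors of equal length, $\vec a\prec\vec b$ means that after sorting both in descending order, $\sum_{i=1}^k a_i\le\sum_{i=1}^k b_i$ for every $k$, with equality when $k$ is the full length. The set of descending-ordered probability vectors is a lattice under $\prec$, and the least upper bound of $\{\vec p(x|x')\}$ exists in it. *)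

theory Defs
  imports Complex_Main
begin

text \<open>The Hilbert spaces H_A, H_B are C^N with coordinates indexed by
  {0..<N}; a vector is a function nat => complex (only indices < N matter).
  H_A (x) H_B is indexed by pairs (a,b) in {0..<N} x {0..<N}.
  A projective measurement is an orthonormal basis, given as a family
  X :: nat => (nat => complex), with X i the i-th basis vector (i < N).\<close>

definition idx2 :: "nat \<Rightarrow> (nat \<times> nat) set" where
  "idx2 N = {0..<N} \<times> {0..<N}"

definition density_op :: "nat \<Rightarrow> (nat \<times> nat \<Rightarrow> nat \<times> nat \<Rightarrow> complex) \<Rightarrow> bool" where
  "density_op N \<rho> \<longleftrightarrow>
     (\<forall>a\<in>idx2 N. \<forall>b\<in>idx2 N. \<rho> a b = cnj (\<rho> b a)) \<and>
     (\<forall>v :: nat \<times> nat \<Rightarrow> complex.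
        0 \<le> Re (\<Sum>a\<in>idx2 N. \<Sum>b\<in>idx2 N. cnj (v a) * \<rho> a b * v b)) \<and>
     (\<Sum>a\<in>idx2 N. \<rho> a a) = 1"

definition onb :: "nat \<Rightarrow> (nat \<Rightarrow> nat \<Rightarrow> complex) \<Rightarrow> bool" where
  "onb N X \<longleftrightarrow> (\<forall>i<N. \<forall>j<N. (\<Sum>k<N. cnj (X i k) * X j k) = (if i = j then 1 else 0))"

text \<open>P_{i mu} = <x_i (x) x'_mu| rho |x_i (x) x'_mu>  (real for Hermitian rho).\<close>
definition joint_prob ::
  "nat \<Rightarrow> (nat \<times> nat \<Rightarrow> nat \<times> nat \<Rightarrow> complex) \<Rightarrow> (nat \<Rightarrow> nat \<Rightarrow> complex)
     \<Rightarrow> (nat \<Rightarrow> nat \<Rightarrow> complex) \<Rightarrow> nat \<Rightarrow> nat \<Rightarrow> real" where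
  "joint_prob N \<rho> X X' i \<mu> =
     Re (\<Sum>a\<in>idx2 N. \<Sum>b\<in>idx2 N.
           cnj (X i (fst a) * X' \<mu> (snd a)) * \<rho> a b * (X i (fst b) * X' \<mu> (snd b)))"

definition sort_desc :: "real list \<Rightarrow> real list" where
  "sort_desc xs = rev (sort xs)"

definition pvec ::
  "nat \<Rightarrow> (nat \<times> nat \<Rightarrow> nat \<times> nat \<Rightarrow> complex) \<Rightarrow> (nat \<Rightarrow> nat \<Rightarrow> complex)
     \<Rightarrow> (nat \<Rightarrow> nat \<Rightarrow> complex) \<Rightarrow> nat \<Rightarrow> real list" where
  "pvec N \<rho> X X' \<mu> = map (\<lambda>i. joint_prob N \<rho> X X' i \<mu>) [0..<N]"

definition maj_marginal ::
  "nat \<Rightarrow> (nat \<times> nat \<Rightarrow> nat \<times> nat \<Rightarrow> complex) \<Rightarrow> (nat \<Rightarrow> nat \<Rightarrow> complex)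
     \<Rightarrow> (nat \<Rightarrow> nat \<Rightarrow> complex) \<Rightarrow> real list" where
  "maj_marginal N \<rho> X X' =
     map (\<lambda>k. \<Sum>\<mu><N. sort_desc (pvec N \<rho> X X' \<mu>) ! k) [0..<N]"

definition majorized :: "real list \<Rightarrow> real list \<Rightarrow> bool" where
  "majorized a b \<longleftrightarrow> length a = length b \<and>
     (\<forall>k\<le>length a. sum_list (take k (sort_desc a)) \<le> sum_list (take k (sort_desc b))) \<and>
     sum_list a = sum_list b"

definition desc_prob_vec :: "nat \<Rightarrow> real list \<Rightarrow> bool" where
  "desc_prob_vec N v \<longleftrightarrow> length v = N \<and> sorted (rev v) \<and> (\<forall>x\<in>set v. 0 \<le> x) \<and> sum_list v = 1"

definition is_maj_lub :: "nat \<Rightarrow> real list set \<Rightarrow> real list \<Rightarrow> bool" where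
  "is_maj_lub N S s \<longleftrightarrow> desc_prob_vec N s \<and> (\<forall>v\<in>S. majorized v s) \<and>
     (\<forall>t. desc_prob_vec N t \<and> (\<forall>v\<in>S. majorized v t) \<longrightarrow> majorized s t)"

definition marginal_set ::
  "nat \<Rightarrow> (nat \<times> nat \<Rightarrow> nat \<times> nat \<Rightarrow> complex) \<Rightarrow> (nat \<Rightarrow> nat \<Rightarrow> complex) \<Rightarrow> real list set" where
  "marginal_set N \<rho> X = {maj_marginal N \<rho> X X' | X'. onb N X'}"

definition kron :: "real list \<Rightarrow> real list \<Rightarrow> real list" where
  "kron xs ys = concat (map (\<lambda>a. map (\<lambda>b. a * b) ys) xs)"

definition vsum :: "real list \<Rightarrow> real list \<Rightarrow> real list" where
  "vsum xs ys = map2 (+) xs ys"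

end

theory Submission
  imports Defs "HOL-Combinatorics.Permutations"
begin

text \<open>Only the upper-bound half of the least-upper-bound property is used:
  \<open>p(x|x') \<prec> s\<^sup>x\<close> and \<open>p(y|y') \<prec> s\<^sup>y\<close>, and each of the three operations
  is monotone for majorization. Monotonicity is most transparent in Ky Fan's form of
  majorization: \<open>f \<prec> g\<close> iff every sum of \<open>k\<close> entries of \<open>f\<close> is bounded by some
  sum of \<open>k\<close> entries of \<open>g\<close> (and the totals agree). A \<open>k\<close>-set of indices of a
  direct sum splits into its two blocks, and one of a Kronecker product into rows, which
  gives \<open>a \<otimes> b \<prec> a \<otimes> t \<prec> s \<otimes> t\<close> for nonnegative \<open>a\<close> and \<open>t\<close>. For the vector
  sum, the majorized marginals are already descending, so the top-\<open>k\<close> sum of their sum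
  is the sum of their top-\<open>k\<close> sums.\<close>

text \<open>Ky Fan's form of majorization, meaningful only for finite \<open>A\<close>
  (\<^const>\<open>card\<close> is \<open>0\<close> on infinite sets).\<close>

definition majorized_on :: "'a set \<Rightarrow> ('a \<Rightarrow> real) \<Rightarrow> ('a \<Rightarrow> real) \<Rightarrow> bool" where
  "majorized_on A f g \<longleftrightarrow>
     (\<forall>I\<subseteq>A. \<exists>J\<subseteq>A. card J = card I \<and> sum f I \<le> sum g J) \<and> sum f A = sum g A"

lemma majorized_on_trans [trans]:
  "majorized_on A f g \<Longrightarrow> majorized_on A g h \<Longrightarrow> majorized_on A f h"
  unfolding majorized_on_def by (metis order_trans)

lemma majorized_on_reindex:
  assumes h: "bij_betw h B A"
    and f: "\<And>x. x \<in> B \<Longrightarrow> f' x = f (h x)" and g: "\<And>x. x \<in> B \<Longrightarrow> g' x = g (h x)"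
    and fg: "majorized_on A f g"
  shows "majorized_on B f' g'"
  unfolding majorized_on_def
proof (intro conjI allI impI)
  have inj: "inj_on h B" using h by (rule bij_betw_imp_inj_on)
  fix I assume I: "I \<subseteq> B"
  have "h ` I \<subseteq> A" using I h by (auto simp: bij_betw_def)
  then obtain J where J: "J \<subseteq> A" "card J = card (h ` I)" "sum f (h ` I) \<le> sum g J"
    using fg unfolding majorized_on_def by blast
  define J' where "J' = B \<inter> h -` J"
  have J'_sub: "J' \<subseteq> B" unfolding J'_def by blast
  have hJ': "h ` J' = J" using h J(1) unfolding J'_def bij_betw_def by blast
  have "card J' = card I"
    using J(2) hJ' card_image inj_on_subset[OF inj] I J'_sub by metis
  moreover have "sum f' I \<le> sum g' J'"
  proof -
    have "sum f' I = sum f (h ` I)"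
      unfolding sum.reindex[OF inj_on_subset[OF inj I]] comp_def using f I by (intro sum.cong) auto
    also have "\<dots> \<le> sum g J" by (fact J(3))
    also have "\<dots> = sum g' J'"
      unfolding hJ'[symmetric] sum.reindex[OF inj_on_subset[OF inj J'_sub]] comp_def
      using g J'_sub by (intro sum.cong) auto
    finally show ?thesis .
  qed
  ultimately show "\<exists>J\<subseteq>B. card J = card I \<and> sum f' I \<le> sum g' J" using J'_sub by blast
next
  have "sum f' B = sum f A" "sum g' B = sum g A"
    using sum.reindex_bij_betw[OF h] f g by (auto intro: sum.cong)
  then show "sum f' B = sum g' B" using fg unfolding majorized_on_def by simp
qed

lemma majorized_on_Un:
  assumes A: "finite A" and B: "finite B" and AB: "A \<inter> B = {}"
    and "majorized_on A f g" and "majorized_on B f g"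
  shows "majorized_on (A \<union> B) f g"
  unfolding majorized_on_def
proof (intro conjI allI impI)
  fix I assume I: "I \<subseteq> A \<union> B"
  obtain J\<^sub>A where J\<^sub>A: "J\<^sub>A \<subseteq> A" "card J\<^sub>A = card (I \<inter> A)" "sum f (I \<inter> A) \<le> sum g J\<^sub>A"
    using \<open>majorized_on A f g\<close> unfolding majorized_on_def by (meson inf_le2)
  obtain J\<^sub>B where J\<^sub>B: "J\<^sub>B \<subseteq> B" "card J\<^sub>B = card (I \<inter> B)" "sum f (I \<inter> B) \<le> sum g J\<^sub>B"
    using \<open>majorized_on B f g\<close> unfolding majorized_on_def by (meson inf_le2)
  have I_split: "I = (I \<inter> A) \<union> (I \<inter> B)" using I by blast
  have fin: "finite (I \<inter> A)" "finite (I \<inter> B)" "finite J\<^sub>A" "finite J\<^sub>B"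
    using A B J\<^sub>A(1) J\<^sub>B(1) finite_subset by auto
  have disj: "(I \<inter> A) \<inter> (I \<inter> B) = {}" "J\<^sub>A \<inter> J\<^sub>B = {}" using AB J\<^sub>A(1) J\<^sub>B(1) by auto
  have "card I = card (I \<inter> A) + card (I \<inter> B)"
    by (subst I_split) (rule card_Un_disjoint[OF fin(1,2) disj(1)])
  then have "card (J\<^sub>A \<union> J\<^sub>B) = card I"
    using J\<^sub>A(2) J\<^sub>B(2) card_Un_disjoint[OF fin(3,4) disj(2)] by simp
  moreover have "sum f I = sum f (I \<inter> A) + sum f (I \<inter> B)"
    by (subst I_split) (rule sum.union_disjoint[OF fin(1,2) disj(1)])
  then have "sum f I \<le> sum g (J\<^sub>A \<union> J\<^sub>B)"
    using J\<^sub>A(3) J\<^sub>B(3) sum.union_disjoint[OF fin(3,4) disj(2), of g] by simp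
  ultimately show "\<exists>J\<subseteq>A \<union> B. card J = card I \<and> sum f I \<le> sum g J"
    using J\<^sub>A(1) J\<^sub>B(1) by blast
next
  show "sum f (A \<union> B) = sum g (A \<union> B)"
    using assms unfolding majorized_on_def by (simp add: sum.union_disjoint)
qed

lemma majorized_on_Times_left:
  assumes A: "finite A" and B: "finite B" and w: "\<And>i. i \<in> A \<Longrightarrow> 0 \<le> w i"
    and gg: "majorized_on B g g'"
  shows "majorized_on (A \<times> B) (\<lambda>(i, j). w i * g j) (\<lambda>(i, j). w i * g' j)"
  unfolding majorized_on_def
proof (intro conjI allI impI)
  fix I assume I: "I \<subseteq> A \<times> B"
  define row where "row i = {j. (i, j) \<in> I}" for i
  have I_eq: "I = Sigma A row" using I unfolding row_def by auto
  have row_sub: "row i \<subseteq> B" for i using I unfolding row_def by auto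
  have "\<forall>i. \<exists>J\<subseteq>B. card J = card (row i) \<and> sum g (row i) \<le> sum g' J"
    using gg row_sub unfolding majorized_on_def by blast
  then obtain J where J: "\<And>i. J i \<subseteq> B" "\<And>i. card (J i) = card (row i)"
      "\<And>i. sum g (row i) \<le> sum g' (J i)"
    by metis
  have fin: "finite (row i)" "finite (J i)" for i
    using finite_subset[OF row_sub B] finite_subset[OF J(1) B] by auto
  have "card (Sigma A J) = card I"
    unfolding I_eq using A fin J(2) by simp
  moreover have "sum (\<lambda>(i, j). w i * g j) I \<le> sum (\<lambda>(i, j). w i * g' j) (Sigma A J)"
  proof -
    have "sum (\<lambda>(i, j). w i * g j) I = (\<Sum>i\<in>A. w i * sum g (row i))"
      unfolding I_eq by (simp add: sum.Sigma[symmetric] A fin sum_distrib_left)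
    also have "\<dots> \<le> (\<Sum>i\<in>A. w i * sum g' (J i))"
      by (intro sum_mono mult_left_mono J(3) w)
    also have "\<dots> = sum (\<lambda>(i, j). w i * g' j) (Sigma A J)"
      by (simp add: sum.Sigma[symmetric] A fin sum_distrib_left)
    finally show ?thesis .
  qed
  ultimately show "\<exists>J\<subseteq>A \<times> B. card J = card I \<and>
      sum (\<lambda>(i, j). w i * g j) I \<le> sum (\<lambda>(i, j). w i * g' j) J"
    using J(1) by blast
next
  show "sum (\<lambda>(i, j). w i * g j) (A \<times> B) = sum (\<lambda>(i, j). w i * g' j) (A \<times> B)"
    using gg unfolding majorized_on_def
    by (simp add: sum.cartesian_product[symmetric] sum_distrib_left[symmetric])
qed

lemma majorized_on_Times_right:
  assumes "finite A" and "finite B" and "\<And>j. j \<in> B \<Longrightarrow> 0 \<le> w j"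
    and "majorized_on A g g'"
  shows "majorized_on (A \<times> B) (\<lambda>(i, j). g i * w j) (\<lambda>(i, j). g' i * w j)"
proof (rule majorized_on_reindex[OF _ _ _ majorized_on_Times_left[OF assms(2,1,3,4)]])
  show "bij_betw prod.swap (A \<times> B) (B \<times> A)"
    by (simp add: bij_betw_def product_swap)
qed auto

lemma sum_le_sum_lessThan_card_if_antimono:
  fixes s :: "nat \<Rightarrow> real"
  assumes antimono: "\<And>i j. i \<le> j \<Longrightarrow> j < n \<Longrightarrow> s j \<le> s i" and I: "I \<subseteq> {..<n}"
  shows "sum s I \<le> sum s {..<card I}"
proof -
  let ?k = "card I"
  define P where "P = I - {..<?k}"
  define Q where "Q = {..<?k} - I"
  have fin: "finite I" "finite P" using I finite_subset unfolding P_def by auto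
  have "?k = card (I \<inter> {..<?k}) + card P"
    unfolding P_def using card_Int_Diff[OF fin(1), of "{..<?k}"] by (simp add: Int_commute)
  moreover have "?k = card (I \<inter> {..<?k}) + card Q"
    unfolding Q_def using card_Int_Diff[of "{..<?k}" I] by (simp add: Int_commute)
  ultimately have card_PQ: "card P = card Q" by simp
  have "sum s P \<le> sum s Q"
  proof (cases "P = {}")
    case True
    then have "Q = {}" using card_PQ fin unfolding Q_def by simp
    with True show ?thesis by simp
  next
    case False
    then have "?k < n" using I unfolding P_def by auto
    have "sum s P \<le> of_nat (card P) * s ?k"
      using sum_bounded_above[of P s "s ?k"] antimono I unfolding P_def by (auto simp: subset_iff)
    also have "\<dots> = of_nat (card Q) * s ?k" using card_PQ by simp
    also have "\<dots> \<le> sum s Q"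
      using sum_bounded_below[of Q "s ?k" s] antimono \<open>?k < n\<close> unfolding Q_def by auto
    finally show ?thesis .
  qed
  moreover have "sum s I = sum s (I \<inter> {..<?k}) + sum s P"
    unfolding P_def using sum.Int_Diff[OF fin(1)] by blast
  moreover have "sum s {..<?k} = sum s (I \<inter> {..<?k}) + sum s Q"
    unfolding Q_def using sum.Int_Diff[of "{..<?k}" s I] by (simp add: Int_commute)
  ultimately show ?thesis by simp
qed

lemma sum_list_take_eq_sum_nth: "k \<le> length xs \<Longrightarrow> sum_list (take k xs) = (\<Sum>i<k. xs ! i)"
  by (simp add: sum_list_sum_nth atLeast0LessThan min_absorb2)

lemma length_sort_desc [simp]: "length (sort_desc xs) = length xs"
  by (simp add: sort_desc_def)

lemma mset_sort_desc [simp]: "mset (sort_desc xs) = mset xs"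
  by (simp add: sort_desc_def)

lemma set_sort_desc [simp]: "set (sort_desc xs) = set xs"
  by (simp add: sort_desc_def)

lemma sum_list_sort_desc [simp]: "sum_list (sort_desc xs) = sum_list (xs :: real list)"
  by (metis mset_sort_desc sum_mset_sum_list)

lemma sorted_rev_sort_desc: "sorted (rev (sort_desc xs))"
  by (simp add: sort_desc_def)

lemma sort_desc_id:
  assumes "sorted (rev xs)"
  shows "sort_desc xs = xs"
proof -
  have "sort xs = sort (rev xs)" by (rule properties_for_sort) auto
  then show ?thesis using sorted_sort_id[OF assms] by (simp add: sort_desc_def)
qed

lemma nth_sort_desc_permutes:
  obtains p where "p permutes {..<length xs}" "\<And>i. i < length xs \<Longrightarrow> sort_desc xs ! i = xs ! p i"
proof -
  obtain p where p: "p permutes {..<length xs}" "permute_list p xs = sort_desc xs"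
    using mset_eq_permutation[of "sort_desc xs" xs] by auto
  show thesis using that[OF p(1)] permute_list_nth[OF p(1)] p(2) by metis
qed

lemma nth_permutes_sort_desc:
  obtains p where "p permutes {..<length xs}" "\<And>i. i < length xs \<Longrightarrow> xs ! i = sort_desc xs ! p i"
proof -
  obtain p where p: "p permutes {..<length xs}" "permute_list p (sort_desc xs) = xs"
    using mset_eq_permutation[of xs "sort_desc xs"] by auto
  show thesis using that[OF p(1)] permute_list_nth[of p "sort_desc xs"] p by simp
qed

lemma sum_nth_le_sum_take_sort_desc:
  assumes I: "I \<subseteq> {..<length xs}"
  shows "sum ((!) xs) I \<le> sum_list (take (card I) (sort_desc xs))"
proof -
  let ?s = "sort_desc xs"
  obtain p where p: "p permutes {..<length xs}" "\<And>i. i < length xs \<Longrightarrow> xs ! i = ?s ! p i"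
    using nth_permutes_sort_desc[of xs] by blast
  have inj: "inj_on p I" using p(1) by (rule permutes_inj_on)
  have "sum ((!) xs) I = sum ((!) ?s) (p ` I)"
    unfolding sum.reindex[OF inj] comp_def using I p(2) by (intro sum.cong) auto
  also have "\<dots> \<le> sum ((!) ?s) {..<card (p ` I)}"
  proof (rule sum_le_sum_lessThan_card_if_antimono)
    show "p ` I \<subseteq> {..<length xs}" using I permutes_image[OF p(1)] by blast
  qed (use sorted_rev_sort_desc[of xs] in \<open>auto simp: sorted_rev_iff_nth_mono\<close>)
  also have "\<dots> = sum_list (take (card I) ?s)"
    using card_image[OF inj] card_mono[OF _ I] by (simp add: sum_list_take_eq_sum_nth)
  finally show ?thesis .
qed

lemma sum_take_sort_desc_attained:
  assumes k: "k \<le> length xs"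
  obtains I where "I \<subseteq> {..<length xs}" "card I = k"
    "sum ((!) xs) I = sum_list (take k (sort_desc xs))"
proof -
  let ?s = "sort_desc xs"
  obtain p where p: "p permutes {..<length xs}" "\<And>i. i < length xs \<Longrightarrow> ?s ! i = xs ! p i"
    using nth_sort_desc_permutes[of xs] by blast
  have inj: "inj_on p {..<k}" using p(1) by (rule permutes_inj_on)
  have "sum ((!) xs) (p ` {..<k}) = (\<Sum>i<k. ?s ! i)"
    unfolding sum.reindex[OF inj] comp_def using k p(2) by (intro sum.cong) auto
  then show ?thesis
  proof (intro that)
    show "p ` {..<k} \<subseteq> {..<length xs}" using k permutes_image[OF p(1)] by auto
    show "card (p ` {..<k}) = k" using card_image[OF inj] by simp
  qed (use k in \<open>simp add: sum_list_take_eq_sum_nth\<close>)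
qed

lemma majorized_iff_majorized_on:
  "majorized a b \<longleftrightarrow> length a = length b \<and> majorized_on {..<length a} ((!) a) ((!) b)"
proof (cases "length a = length b")
  case True
  have "(\<forall>k\<le>length a. sum_list (take k (sort_desc a)) \<le> sum_list (take k (sort_desc b)))
    \<longleftrightarrow> (\<forall>I\<subseteq>{..<length a}. \<exists>J\<subseteq>{..<length a}. card J = card I \<and> sum ((!) a) I \<le> sum ((!) b) J)"
  proof safe
    fix I assume I: "I \<subseteq> {..<length a}"
      and top: "\<forall>k\<le>length a. sum_list (take k (sort_desc a)) \<le> sum_list (take k (sort_desc b))"
    have card_I: "card I \<le> length a" using card_mono[OF _ I] by simp
    then obtain J where J: "J \<subseteq> {..<length b}" "card J = card I"
      "sum ((!) b) J = sum_list (take (card I) (sort_desc b))"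
      using True by (metis sum_take_sort_desc_attained)
    have "sum ((!) a) I \<le> sum_list (take (card I) (sort_desc a))"
      using I by (rule sum_nth_le_sum_take_sort_desc)
    also have "\<dots> \<le> sum ((!) b) J" using top card_I J(3) by simp
    finally show "\<exists>J\<subseteq>{..<length a}. card J = card I \<and> sum ((!) a) I \<le> sum ((!) b) J"
      using J(1,2) True by auto
  next
    fix k assume k: "k \<le> length a"
      and dom: "\<forall>I\<subseteq>{..<length a}. \<exists>J\<subseteq>{..<length a}. card J = card I \<and> sum ((!) a) I \<le> sum ((!) b) J"
    obtain I where I: "I \<subseteq> {..<length a}" "card I = k"
      "sum ((!) a) I = sum_list (take k (sort_desc a))"
      using k by (rule sum_take_sort_desc_attained)
    then obtain J where J: "J \<subseteq> {..<length b}" "card J = k" "sum ((!) a) I \<le> sum ((!) b) J"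
      using dom True by metis
    have "sum ((!) b) J \<le> sum_list (take k (sort_desc b))"
      using sum_nth_le_sum_take_sort_desc[OF J(1)] J(2) by simp
    then show "sum_list (take k (sort_desc a)) \<le> sum_list (take k (sort_desc b))"
      using I(3) J(3) by simp
  qed
  moreover have "sum_list xs = sum ((!) xs) {..<length xs}" for xs :: "real list"
    by (simp add: sum_list_sum_nth atLeast0LessThan)
  ultimately show ?thesis
    using True unfolding majorized_def majorized_on_def by simp
qed (simp add: majorized_def)

lemma majorized_append:
  assumes "majorized a s" and "majorized b t"
  shows "majorized (a @ b) (s @ t)"
proof -
  let ?n = "length a" and ?m = "length b"
  have len: "length s = ?n" "length t = ?m" using assms by (simp_all add: majorized_def)
  have a: "majorized_on {..<?n} ((!) a) ((!) s)" and b: "majorized_on {..<?m} ((!) b) ((!) t)"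
    using assms unfolding majorized_iff_majorized_on by blast+
  have "majorized_on {..<?n} ((!) (a @ b)) ((!) (s @ t))"
    by (rule majorized_on_reindex[OF bij_betw_id _ _ a]) (simp_all add: nth_append len)
  moreover have "majorized_on {?n..<?n + ?m} ((!) (a @ b)) ((!) (s @ t))"
  proof (rule majorized_on_reindex[OF _ _ _ b])
    show "bij_betw (\<lambda>i. i - ?n) {?n..<?n + ?m} {..<?m}"
      by (rule bij_betw_byWitness[where f' = "\<lambda>i. i + ?n"]) auto
  qed (simp_all add: nth_append len)
  ultimately have "majorized_on ({..<?n} \<union> {?n..<?n + ?m}) ((!) (a @ b)) ((!) (s @ t))"
    by (intro majorized_on_Un) auto
  moreover have "{..<?n} \<union> {?n..<?n + ?m} = {..<length (a @ b)}" by auto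
  ultimately show ?thesis using len by (simp add: majorized_iff_majorized_on)
qed

lemma kron_eq_map_product: "kron xs ys = map (\<lambda>(a, b). a * b) (List.product xs ys)"
  by (simp add: kron_def product_concat_map map_concat comp_def)

lemma length_kron [simp]: "length (kron xs ys) = length xs * length ys"
  by (simp add: kron_eq_map_product)

lemma nth_kron:
  "i < length xs * length ys \<Longrightarrow> kron xs ys ! i = xs ! (i div length ys) * ys ! (i mod length ys)"
  by (simp add: kron_eq_map_product product_nth)

lemma bij_betw_div_mod:
  fixes m n :: nat
  shows "bij_betw (\<lambda>i. (i div m, i mod m)) {..<n * m} ({..<n} \<times> {..<m})"
proof (rule bij_betw_byWitness[where f' = "\<lambda>(i, j). i * m + j"])
  have "i * m + j < n * m" if "i < n" "j < m" for i j
  proof -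
    have "i * m + j < (i + 1) * m" using that by simp
    also have "\<dots> \<le> n * m" using that by (intro mult_right_mono) auto
    finally show ?thesis .
  qed
  then show "(\<lambda>(i, j). i * m + j) ` ({..<n} \<times> {..<m}) \<subseteq> {..<n * m}" by auto
  have "i mod m < m" if "i < n * m" for i using that by (cases "m = 0") auto
  then show "(\<lambda>i. (i div m, i mod m)) ` {..<n * m} \<subseteq> {..<n} \<times> {..<m}"
    by (auto simp: less_mult_imp_div_less)
qed auto

lemma majorized_kron:
  assumes "majorized a s" and "majorized b t"
    and a_nonneg: "\<forall>x\<in>set a. 0 \<le> x" and t_nonneg: "\<forall>x\<in>set t. 0 \<le> x"
  shows "majorized (kron a b) (kron s t)"
proof -
  let ?n = "length a" and ?m = "length b"
  have len: "length s = ?n" "length t = ?m" using assms by (simp_all add: majorized_def)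
  have a: "majorized_on {..<?n} ((!) a) ((!) s)" and b: "majorized_on {..<?m} ((!) b) ((!) t)"
    using assms unfolding majorized_iff_majorized_on by blast+
  have "majorized_on ({..<?n} \<times> {..<?m}) (\<lambda>(i, j). a ! i * b ! j) (\<lambda>(i, j). a ! i * t ! j)"
    using a_nonneg by (intro majorized_on_Times_left[OF _ _ _ b]) auto
  also have "majorized_on ({..<?n} \<times> {..<?m}) \<dots> (\<lambda>(i, j). s ! i * t ! j)"
    using t_nonneg len by (intro majorized_on_Times_right[OF _ _ _ a]) auto
  finally have "majorized_on ({..<?n} \<times> {..<?m}) (\<lambda>(i, j). a ! i * b ! j) (\<lambda>(i, j). s ! i * t ! j)" .
  then have "majorized_on {..<?n * ?m} ((!) (kron a b)) ((!) (kron s t))"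
    by (intro majorized_on_reindex[OF bij_betw_div_mod]) (simp_all add: nth_kron len)
  then show ?thesis using len by (simp add: majorized_iff_majorized_on)
qed

lemma sum_list_take_le_sum_list_take_sort_desc:
  "k \<le> length xs \<Longrightarrow> sum_list (take k xs) \<le> sum_list (take k (sort_desc xs))"
  using sum_nth_le_sum_take_sort_desc[of "{..<k}" xs] by (simp add: sum_list_take_eq_sum_nth)

lemma length_vsum [simp]: "length (vsum xs ys) = min (length xs) (length ys)"
  by (simp add: vsum_def)

lemma take_vsum: "take k (vsum xs ys) = vsum (take k xs) (take k ys)"
  by (simp add: vsum_def take_map take_zip)

lemma sum_list_vsum:
  "length xs = length ys \<Longrightarrow> sum_list (vsum xs ys) = sum_list xs + sum_list ys"
  by (induct xs ys rule: list_induct2) (auto simp: vsum_def)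

lemma sorted_rev_vsum:
  "sorted (rev xs) \<Longrightarrow> sorted (rev ys) \<Longrightarrow> length xs = length ys \<Longrightarrow> sorted (rev (vsum xs ys))"
  unfolding sorted_rev_iff_nth_mono by (auto simp: vsum_def add_mono)

lemma majorized_vsum:
  assumes a: "sorted (rev a)" and b: "sorted (rev b)" and len: "length a = length b"
    and as: "majorized a s" and bt: "majorized b t"
  shows "majorized (vsum a b) (vsum (sort_desc s) (sort_desc t))"
proof -
  have len_st: "length s = length a" "length t = length b"
    using as bt by (simp_all add: majorized_def)
  let ?st = "vsum (sort_desc s) (sort_desc t)"
  have "sum_list (take k (sort_desc (vsum a b))) \<le> sum_list (take k (sort_desc ?st))"
    if k: "k \<le> length a" for k
  proof -
    have "sum_list (take k (sort_desc (vsum a b))) = sum_list (take k a) + sum_list (take k b)"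
      using len by (simp add: sort_desc_id[OF sorted_rev_vsum[OF a b len]] take_vsum sum_list_vsum)
    also have "\<dots> \<le> sum_list (take k (sort_desc s)) + sum_list (take k (sort_desc t))"
      using as bt k len unfolding majorized_def sort_desc_id[OF a] sort_desc_id[OF b]
      by (intro add_mono) auto
    also have "\<dots> = sum_list (take k ?st)"
      using len len_st by (simp add: take_vsum sum_list_vsum)
    also have "\<dots> \<le> sum_list (take k (sort_desc ?st))"
      using k len len_st by (intro sum_list_take_le_sum_list_take_sort_desc) simp
    finally show ?thesis .
  qed
  moreover have "sum_list (vsum a b) = sum_list ?st"
    using as bt len len_st by (simp add: sum_list_vsum majorized_def)
  ultimately show ?thesis
    using len len_st unfolding majorized_def by simp
qed

lemma length_maj_marginal [simp]: "length (maj_marginal N \<rho> X X') = N"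
  by (simp add: maj_marginal_def)

lemma joint_prob_nonneg:
  assumes "density_op N \<rho>"
  shows "0 \<le> joint_prob N \<rho> X X' i \<mu>"
proof -
  have "\<forall>v. 0 \<le> Re (\<Sum>a\<in>idx2 N. \<Sum>b\<in>idx2 N. cnj (v a) * \<rho> a b * v b)"
    using assms unfolding density_op_def by blast
  from spec[OF this, of "\<lambda>a. X i (fst a) * X' \<mu> (snd a)"] show ?thesis
    unfolding joint_prob_def by simp
qed

lemma maj_marginal_nonneg:
  assumes "density_op N \<rho>"
  shows "\<forall>x\<in>set (maj_marginal N \<rho> X X'). 0 \<le> x"
proof
  fix x assume "x \<in> set (maj_marginal N \<rho> X X')"
  then obtain k where k: "k < N" "x = (\<Sum>\<mu><N. sort_desc (pvec N \<rho> X X' \<mu>) ! k)"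
    by (auto simp: maj_marginal_def)
  have "0 \<le> sort_desc (pvec N \<rho> X X' \<mu>) ! k" for \<mu>
  proof -
    have "sort_desc (pvec N \<rho> X X' \<mu>) ! k \<in> set (sort_desc (pvec N \<rho> X X' \<mu>))"
      using k(1) by (intro nth_mem) (simp add: pvec_def)
    then show ?thesis using joint_prob_nonneg[OF assms] by (auto simp: pvec_def)
  qed
  then show "0 \<le> x" using k(2) by (simp add: sum_nonneg)
qed

lemma sorted_rev_maj_marginal: "sorted (rev (maj_marginal N \<rho> X X'))"
  unfolding sorted_rev_iff_nth_mono
proof (intro allI impI)
  fix i j assume ij: "i \<le> j" "j < length (maj_marginal N \<rho> X X')"
  have "sort_desc (pvec N \<rho> X X' \<mu>) ! j \<le> sort_desc (pvec N \<rho> X X' \<mu>) ! i" for \<mu>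
    using sorted_rev_sort_desc[of "pvec N \<rho> X X' \<mu>"] ij
    unfolding sorted_rev_iff_nth_mono by (simp add: pvec_def)
  then show "maj_marginal N \<rho> X X' ! j \<le> maj_marginal N \<rho> X X' ! i"
    using ij by (simp add: maj_marginal_def sum_mono)
qed

theorem corollary1:
  fixes N :: nat
    and \<rho> :: "nat \<times> nat \<Rightarrow> nat \<times> nat \<Rightarrow> complex"
    and X Y X' Y' :: "nat \<Rightarrow> nat \<Rightarrow> complex"
    and sx sy :: "real list"
  assumes "density_op N \<rho>"
    and "onb N X" and "onb N Y"
    and "is_maj_lub N (marginal_set N \<rho> X) sx"
    and "is_maj_lub N (marginal_set N \<rho> Y) sy"
    and "onb N X'" and "onb N Y'"
  shows "majorized (maj_marginal N \<rho> X X' @ maj_marginal N \<rho> Y Y') (sx @ sy)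
       \<and> majorized (kron (maj_marginal N \<rho> X X') (maj_marginal N \<rho> Y Y')) (kron sx sy)
       \<and> majorized (vsum (maj_marginal N \<rho> X X') (maj_marginal N \<rho> Y Y'))
                   (vsum (sort_desc sx) (sort_desc sy))"
proof -
  let ?a = "maj_marginal N \<rho> X X'" and ?b = "maj_marginal N \<rho> Y Y'"
  have "majorized ?a sx" "majorized ?b sy"
    using assms(4-7) unfolding is_maj_lub_def marginal_set_def by blast+
  moreover have "\<forall>x\<in>set sy. 0 \<le> x"
    using assms(5) unfolding is_maj_lub_def desc_prob_vec_def by blast
  ultimately show ?thesis
    using majorized_append majorized_kron[OF _ _ maj_marginal_nonneg[OF assms(1)]]
      majorized_vsum[OF sorted_rev_maj_marginal sorted_rev_maj_marginal] by simp
qed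

end
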